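(* Fix a positive integer $p$. For $n=pf$ let $A_{f\text{-APD},\mathrm{MU},2,n}$ denote the maximum size of a binary code $\mathcal{C}\subseteq\{0,1\}^n$ that is both MU and $f$-APD. Then there exists a constant $c_3>0$ (depending only on $p$) such that for all sufficiently large even $f$, with $n=pf$, \[ c_3\frac{2^n}{n}\le A_{f\text{-APD},\mathrm{MU},2,n}\le\frac{2^n}{n}. \]
   Context: For $\mathbf{a}=(a_1,\dots,a_n)$ write $\mathbf{a}_i^j=(a_i,\dots,a_j)$ if $i\le j$ and $(a_i,a_{i-1},\dots,a_j)$ if $i>j$; $\bar{\mathbf{a}}$ is the bitwise complement. A code $\mathcal{C}\subseteq\{0,1\}^n$ is MU if for all not necessarily distinct $\mathbf{a},\mathbf{b}\in\mathcal{C}$ and all $1\le l<n$, $\mathbf{a}_1^l\ne\mathbf{b}_{n-l+1}^n$. It is $f$-APD if for all not necessarily distinct $\mathbf{a},\mathbf{b}\in\mathcal{C}$ and all $1\le i,j\le n+1-f$, $\bar{\mathbf{a}}_i^{f+i-1}\ne\mathbf{b}_j^{f+j-1}$ and $\bar{\mathbf{a}}_i^{f+i-1}\ne\mathbf{b}_{f+j-1}^{j}$. *)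

theory Defs
  imports Complex_Main
begin

text \<open>Binary words of length n are boolean lists of length n; position k (1-indexed)
  of a word a is a ! (k-1).\<close>

definition words :: "nat \<Rightarrow> bool list set" where
  "words n = {xs. length xs = n}"

text \<open>The substring a_i^{i+f-1} (1-indexed, length f, starting at position i).\<close>
definition subw :: "bool list \<Rightarrow> nat \<Rightarrow> nat \<Rightarrow> bool list" where
  "subw a i f = take f (drop (i - 1) a)"

definition compl_w :: "bool list \<Rightarrow> bool list" where
  "compl_w a = map Not a"

definition MU :: "nat \<Rightarrow> bool list set \<Rightarrow> bool" where
  "MU n C \<longleftrightarrow> (\<forall>a\<in>C. \<forall>b\<in>C. \<forall>l. 1 \<le> l \<and> l < n \<longrightarrow> take l a \<noteq> drop (n - l) b)"

definition APD :: "nat \<Rightarrow> nat \<Rightarrow> bool list set \<Rightarrow> bool" where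
  "APD f n C \<longleftrightarrow> (\<forall>a\<in>C. \<forall>b\<in>C. \<forall>i j. 1 \<le> i \<and> i \<le> n + 1 - f \<and> 1 \<le> j \<and> j \<le> n + 1 - f \<longrightarrow>
      compl_w (subw a i f) \<noteq> subw b j f \<and> compl_w (subw a i f) \<noteq> rev (subw b j f))"

definition A_APD_MU :: "nat \<Rightarrow> nat \<Rightarrow> nat" where
  "A_APD_MU f n = Max {card C | C. C \<subseteq> words n \<and> MU n C \<and> APD f n C}"

end

(*
  Upper bound: if a codeword of an MU code C of length n were a proper rotation of
  another, a proper prefix of one would be a suffix of the other.  Hence the n rotations
  of the codewords are pairwise distinct words and n |C| <= 2^n.

  Lower bound: fix k with 8n <= 2^k <= 16n and take the codewords 1^k 0 B_1 ... B_m T,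
  where the blocks B_i (of length g, about f/3) and the tail T end in 0, avoid 1^k and
  contain 0^(k+1).  The marker 1^k occurs only at the front and every codeword ends in 0,
  so the code is MU.  No codeword contains 1^(k+1), whereas every window of length f
  contains a whole block, hence 0^(k+1), so the complement of a window is never a window
  read in either direction.  Blocks are counted through the words 0 u 0 1 0^(k+1) v 0 in
  which the displayed 1 0^(k+1) is the first occurrence; summing over its position shows
  that a fraction at least 1/(8192 p) of all words of length L are blocks, and since
  m + 1 <= 4p the code has at least 2^n / (32 n (8192 p)^(4p)) words.
*)

theory Submission
  imports Defs "HOL-Library.Sublist" "HOL-Library.Discrete_Functions"
begin

lemma finite_words [simp]: "finite (words n)"
  using finite_lists_length_eq[of "UNIV :: bool set" n] by (simp add: words_def)

lemma card_words: "card (words n) = 2 ^ n"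
  using card_lists_length_eq[of "UNIV :: bool set" n] by (simp add: words_def)

section \<open>Rotations of the codewords of an MU code\<close>

lemma MU_prefix_neq_suffix:
  "MU n C \<Longrightarrow> a \<in> C \<Longrightarrow> b \<in> C \<Longrightarrow> 0 < l \<Longrightarrow> l < n \<Longrightarrow>
    take l a \<noteq> drop (n - l) b"
  unfolding MU_def by auto

lemma MU_rotate_notin:
  assumes "MU n C" "a \<in> C" "b \<in> C" "length b = n" "0 < d" "d < n"
  shows "rotate d b \<noteq> a"
proof
  assume "rotate d b = a"
  then have "take (n - d) a = drop d b"
    using assms(4-6) by (auto simp: rotate_drop_take)
  moreover have "take (n - d) a \<noteq> drop (n - (n - d)) b"
    using assms(5,6) by (intro MU_prefix_neq_suffix[OF assms(1-3)]) auto
  ultimately show False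
    using assms(6) by simp
qed

lemma MU_inj_on_rotations:
  assumes "MU n C" "C \<subseteq> words n"
  shows "inj_on (\<lambda>(c, r). rotate r c) (C \<times> {..<n})"
proof -
  have key: "c = c' \<and> r = r'"
    if "c \<in> C" "c' \<in> C" "r \<le> r'" "r' < n" "rotate r c = rotate r' c'" for c c' r r'
  proof -
    have len: "length c = n" "length c' = n"
      using that(1,2) assms(2) by (auto simp: words_def)
    have "c = rotate (n - r) (rotate r c)"
      using len that(3,4) by (simp add: rotate_rotate)
    also have "\<dots> = rotate (n - r + r') c'"
      using that(5) by (simp add: rotate_rotate)
    also have "\<dots> = rotate (r' - r) c'"
    proof -
      have "(n - r + r') mod n = r' - r"
        using that(3,4) by (simp add: mod_if)
      then show ?thesis
        using len by (metis rotate_conv_mod)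
    qed
    finally have c: "c = rotate (r' - r) c'" .
    have "r' - r = 0"
      using MU_rotate_notin[OF assms(1) that(1,2) len(2), of "r' - r"] c that(4)
      by (metis diff_le_self le_less_trans neq0_conv)
    then show ?thesis
      using c that(3) by simp
  qed
  show ?thesis
  proof (rule inj_onI)
    fix x y
    assume "x \<in> C \<times> {..<n}" "y \<in> C \<times> {..<n}"
      "(\<lambda>(c, r). rotate r c) x = (\<lambda>(c, r). rotate r c) y"
    moreover obtain c r c' r' where "x = (c, r)" "y = (c', r')"
      by fastforce
    ultimately show "x = y"
      using key[of c c' r r'] key[of c' c r' r] by (cases "r \<le> r'") auto
  qed
qed

lemma MU_card_le:
  assumes "MU n C" "C \<subseteq> words n"
  shows "n * card C \<le> 2 ^ n"
proof -
  have "(\<lambda>(c, r). rotate r c) ` (C \<times> {..<n}) \<subseteq> words n"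
    using assms(2) by (auto simp: words_def)
  then have "card (C \<times> {..<n}) \<le> card (words n)"
    by (intro card_inj_on_le[OF MU_inj_on_rotations[OF assms]]) auto
  then show ?thesis
    by (simp add: card_cartesian_product card_words mult.commute)
qed

lemma finite_A_APD_MU_candidates: "finite {card C | C. C \<subseteq> words n \<and> MU n C \<and> APD f n C}"
proof -
  have "{card C | C. C \<subseteq> words n \<and> MU n C \<and> APD f n C} \<subseteq> card ` Pow (words n)"
    by auto
  then show ?thesis
    by (rule finite_subset) simp
qed

lemma card_le_A_APD_MU:
  "C \<subseteq> words n \<Longrightarrow> MU n C \<Longrightarrow> APD f n C \<Longrightarrow> card C \<le> A_APD_MU f n"
  unfolding A_APD_MU_def by (rule Max_ge[OF finite_A_APD_MU_candidates]) blast

lemma A_APD_MU_le: "n * A_APD_MU f n \<le> 2 ^ n"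
proof -
  have "MU n {}" "APD f n {}"
    by (simp_all add: MU_def APD_def)
  then have "A_APD_MU f n \<in> {card C | C. C \<subseteq> words n \<and> MU n C \<and> APD f n C}"
    unfolding A_APD_MU_def by (intro Max_in[OF finite_A_APD_MU_candidates]) blast
  then show ?thesis
    using MU_card_le by force
qed

section \<open>Words avoiding a pattern\<close>

lemma not_sublist_append_Cons:
  assumes "x \<notin> set q" "\<not> sublist q a" "\<not> sublist q b"
  shows "\<not> sublist q (a @ x # b)"
proof
  assume "sublist q (a @ x # b)"
  then consider "sublist q (x # b)" | q1 q2 where "q = q1 @ q2" "suffix q1 a" "prefix q2 (x # b)"
    using assms(2) unfolding sublist_append by blast
  then show False
  proof cases
    case 1
    then show False
      using assms by (cases q) (auto simp: sublist_Cons_right)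
  next
    case 2
    then show False
      using assms by (cases q2) (auto dest: suffix_imp_sublist)
  qed
qed

lemma not_sublist_replicate_append:
  assumes "y \<noteq> x" "\<not> sublist (replicate k x) w"
  shows "\<not> sublist (replicate k x) (replicate m y @ w)"
proof (induction m)
  case (Suc m)
  have "\<not> sublist (replicate k x) []"
    using assms(2) by auto
  then show ?case
    using Suc not_sublist_append_Cons[of y "replicate k x" "[]"] assms(1) by simp
qed (use assms(2) in simp)

lemma not_sublist_concat_append:
  assumes "\<forall>b\<in>set bs. b \<noteq> [] \<and> last b = y \<and> \<not> sublist q b" "y \<notin> set q" "\<not> sublist q t"
  shows "\<not> sublist q (concat bs @ t)"
  using assms(1)
proof (induction bs)
  case (Cons b bs)
  then have b: "b = butlast b @ [y]" "\<not> sublist q b"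
    by (auto simp: append_butlast_last_id)
  then have "\<not> sublist q (butlast b)"
    using sublist_order.order_trans sublist_butlast by blast
  then have "\<not> sublist q (butlast b @ y # concat bs @ t)"
    using Cons not_sublist_append_Cons assms(2) by simp
  then show ?case
    by (subst b(1)) simp
qed (use assms(3) in simp)

lemma card_words_containing_le:
  "card {w \<in> words N. sublist q w} * 2 ^ length q \<le> (N + 1) * 2 ^ N"
proof (cases "length q \<le> N")
  case False
  then have "{w \<in> words N. sublist q w} = {}"
    by (auto simp: words_def dest: sublist_length_le)
  then show ?thesis
    by (metis card.empty mult_0 zero_le)
next
  case True
  define m where "m = length q"
  let ?occ = "\<lambda>s. (\<lambda>(a, b). a @ q @ b) ` (words s \<times> words (N - m - s))"
  have "{w \<in> words N. sublist q w} \<subseteq> (\<Union>s\<le>N - m. ?occ s)"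
  proof
    fix w
    assume "w \<in> {w \<in> words N. sublist q w}"
    then obtain a b where "w = a @ q @ b" "length w = N"
      by (auto simp: words_def sublist_def)
    then show "w \<in> (\<Union>s\<le>N - m. ?occ s)"
      by (auto simp: words_def m_def intro!: bexI[of _ "length a"] image_eqI[of _ _ "(a, b)"])
  qed
  then have "card {w \<in> words N. sublist q w} \<le> (\<Sum>s\<le>N - m. card (?occ s))"
    by (intro order.trans[OF card_mono card_UN_le]) auto
  also have "\<dots> \<le> (\<Sum>s\<le>N - m. 2 ^ (N - m))"
  proof (rule sum_mono)
    fix s
    assume "s \<in> {..N - m}"
    then have "card (words s \<times> words (N - m - s)) = 2 ^ (N - m)"
      by (simp add: card_cartesian_product card_words flip: power_add)
    then show "card (?occ s) \<le> 2 ^ (N - m)"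
      by (metis card_image_le finite_SigmaI finite_words)
  qed
  finally have "card {w \<in> words N. sublist q w} \<le> (N - m + 1) * 2 ^ (N - m)"
    by simp
  then have "card {w \<in> words N. sublist q w} * 2 ^ m \<le> (N - m + 1) * (2 ^ (N - m) * 2 ^ m)"
    unfolding mult.assoc[symmetric] by (rule mult_le_mono1)
  also have "\<dots> \<le> (N + 1) * 2 ^ N"
    using True by (simp add: m_def flip: power_add)
  finally show ?thesis
    by (simp add: m_def)
qed

lemma card_words_framed_containing_le:
  "card {u \<in> words i. sublist q (a @ u @ b)} * 2 ^ length q
    \<le> (i + length a + length b + 1) * 2 ^ (i + length a + length b)"
proof -
  define N where "N = i + length a + length b"
  have "card {u \<in> words i. sublist q (a @ u @ b)} \<le> card {w \<in> words N. sublist q w}"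
    by (rule card_inj_on_le[of "\<lambda>u. a @ u @ b"])
      (auto simp: inj_on_def words_def N_def intro: finite_subset[OF _ finite_words[of N]])
  then show ?thesis
    using card_words_containing_le[of N q] mult_le_mono1 order_trans unfolding N_def by blast
qed

section \<open>Counting blocks\<close>

definition blocks :: "nat \<Rightarrow> nat \<Rightarrow> bool list set" where
  "blocks k L = {x \<in> words L. last x = False \<and> \<not> sublist (replicate k True) x
     \<and> sublist (replicate (Suc k) False) x}"

definition marked_block :: "nat \<Rightarrow> bool list \<Rightarrow> bool list \<Rightarrow> bool list" where
  "marked_block k u v = False # u @ False # True # replicate (Suc k) False @ v @ [False]"

text \<open>The zeros around u make the marker the first occurrence of 1 0^(k+1) in
  \<^term>\<open>marked_block k u v\<close>, so that the block determines u and v.\<close>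

definition fillers :: "nat \<Rightarrow> nat \<Rightarrow> bool list set" where
  "fillers k i = {u \<in> words i. \<not> sublist (True # replicate (Suc k) False) (False # u @ [False])
     \<and> \<not> sublist (replicate k True) u}"

lemma card_fillers_ge:
  assumes "8 * (i + 2) \<le> 2 ^ k"
  shows "3 * 2 ^ i \<le> 4 * card (fillers k i)"
proof -
  define B1 where "B1 = {u \<in> words i. sublist (True # replicate (Suc k) False) ([False] @ u @ [False])}"
  define B2 where "B2 = {u \<in> words i. sublist (replicate k True) ([] @ u @ [])}"
  have "card B1 * 2 ^ (k + 2) \<le> (i + 3) * 2 ^ (i + 2)"
    using card_words_framed_containing_le[of i "True # replicate (Suc k) False" "[False]" "[False]"]
    unfolding B1_def
    by (simp only: length_Cons length_replicate list.size(3))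
      (simp only: numeral_2_eq_2 numeral_3_eq_3 add_Suc_right add_0_right One_nat_def)
  then have "card B1 * 2 ^ k \<le> (i + 3) * 2 ^ i"
    by (simp add: power_add)
  moreover have "card B2 * 2 ^ k \<le> (i + 1) * 2 ^ i"
    using card_words_framed_containing_le[of i "replicate k True" "[]" "[]"] by (simp add: B2_def)
  ultimately have "4 * (card B1 + card B2) * 2 ^ k \<le> 8 * (i + 2) * 2 ^ i"
    by (simp add: algebra_simps)
  also have "\<dots> \<le> 2 ^ k * 2 ^ i"
    using assms by simp
  finally have bad: "4 * (card B1 + card B2) \<le> 2 ^ i"
    by simp
  have "words i \<subseteq> fillers k i \<union> (B1 \<union> B2)"
    by (auto simp: fillers_def B1_def B2_def)
  then have "2 ^ i \<le> card (fillers k i \<union> (B1 \<union> B2))"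
    using card_mono[of "fillers k i \<union> (B1 \<union> B2)" "words i"]
    by (simp add: card_words fillers_def B1_def B2_def)
  also have "\<dots> \<le> card (fillers k i) + (card B1 + card B2)"
    using card_Un_le[of "fillers k i" "B1 \<union> B2"] card_Un_le[of B1 B2] by linarith
  finally show ?thesis
    using bad by simp
qed

lemma marked_block_in_blocks:
  assumes "2 \<le> k" "u \<in> fillers k i" "v \<in> fillers k j"
  shows "marked_block k u v \<in> blocks k (i + j + k + 5)"
proof -
  let ?R = "replicate k True"
  have R_Nil: "\<not> sublist ?R []" and R_True: "\<not> sublist ?R [True]"
    using assms(1) by (auto dest: sublist_length_le)
  have u: "\<not> sublist ?R u" and v: "\<not> sublist ?R v"
    using assms(2,3) by (auto simp: fillers_def)
  have "\<not> sublist ?R (v @ False # [])"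
    using not_sublist_append_Cons[OF _ v R_Nil] by simp
  then have "\<not> sublist ?R (replicate k False @ v @ [False])"
    using not_sublist_replicate_append[of False True k] by simp
  then have "\<not> sublist ?R ([True] @ False # replicate k False @ v @ [False])"
    by (intro not_sublist_append_Cons R_True) simp
  then have "\<not> sublist ?R (u @ False # True # replicate (Suc k) False @ v @ [False])"
    using not_sublist_append_Cons[OF _ u] by simp
  then have "\<not> sublist ?R (marked_block k u v)"
    unfolding marked_block_def using not_sublist_append_Cons[OF _ R_Nil, of False] by simp
  moreover have "sublist (replicate (Suc k) False) (marked_block k u v)"
  proof -
    have "marked_block k u v = (False # u @ [False, True]) @ replicate (Suc k) False @ v @ [False]"
      by (simp add: marked_block_def del: replicate_Suc)
    then show ?thesis
      by (metis sublist_appendI)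
  qed
  moreover have "length (marked_block k u v) = i + j + k + 5"
    using assms(2,3) by (simp add: marked_block_def fillers_def words_def)
  ultimately show ?thesis
    by (simp add: blocks_def words_def marked_block_def)
qed

lemma marked_block_neq_if_shorter:
  assumes "u' \<in> fillers k i'" "length u < length u'"
  shows "marked_block k u v \<noteq> marked_block k u' v'"
proof
  let ?P = "True # replicate (Suc k) False"
  assume eq: "marked_block k u v = marked_block k u' v'"
  define x where "x = marked_block k u v"
  have x': "x = (False # u' @ [False]) @ ?P @ v' @ [False]"
    using eq by (simp add: x_def marked_block_def)
  have x: "x = (False # u @ [False] @ ?P) @ v @ [False]"
    by (simp add: x_def marked_block_def)
  show False
  proof (cases "length u + k + 4 \<le> length u' + 2")
    case True
    have "prefix (False # u @ [False] @ ?P) (False # u' @ [False])"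
    proof -
      have len: "length (False # u @ [False] @ ?P) \<le> length u' + 2"
        using True by simp
      have "prefix (False # u @ [False] @ ?P) (take (length u' + 2) x)"
        unfolding x take_append take_all[OF len] by (rule prefixI) simp
      then show ?thesis
        using x' by simp
    qed
    then have "sublist ?P (False # u' @ [False])"
      by (metis prefix_imp_sublist sublist_append_leftI sublist_order.order_trans append_Cons append_assoc)
    then show False
      using assms(1) by (simp add: fillers_def)
  next
    case False
    have "x ! (length u' + 2) = True"
      using x' by (simp add: nth_append)
    moreover have "x = (False # u @ [False, True]) @ replicate (Suc k) False @ v @ [False]"
      using x by simp
    with False assms(2) have "x ! (length u' + 2) = False"
      by (simp add: nth_append del: replicate_Suc)
    ultimately show False
      by simp
  qed
qed

lemma marked_block_inj:
  assumes "u \<in> fillers k i" "u' \<in> fillers k i'" "marked_block k u v = marked_block k u' v'"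
  shows "u = u' \<and> v = v'"
proof -
  have "length u = length u'"
    using marked_block_neq_if_shorter[OF assms(1), of u' v' v] marked_block_neq_if_shorter[OF assms(2), of u v v']
      assms(3) by (metis linorder_neqE_nat)
  then show ?thesis
    using assms(3) by (simp add: marked_block_def)
qed

lemma finite_fillers [simp]: "finite (fillers k i)"
  by (simp add: fillers_def)

lemma finite_blocks [simp]: "finite (blocks k L)"
  by (simp add: blocks_def)

lemma sum_card_fillers_le_card_blocks:
  assumes "2 \<le> k"
  shows "(\<Sum>i<N. card (fillers k i) * card (fillers k (N - 1 - i))) \<le> card (blocks k (N + k + 4))"
proof -
  define S where "S = (SIGMA i:{..<N}. fillers k i \<times> fillers k (N - 1 - i))"
  define h where "h = (\<lambda>(i :: nat, u, v). marked_block k u v)"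
  have "inj_on h S"
  proof (rule inj_onI)
    fix a b
    assume "a \<in> S" "b \<in> S" "h a = h b"
    moreover obtain i u v i' u' v' where "a = (i, u, v)" "b = (i', u', v')"
      by (metis prod.exhaust)
    ultimately show "a = b"
      using marked_block_inj[of u k i u' i' v v'] by (auto simp: S_def h_def fillers_def words_def)
  qed
  moreover have "h ` S \<subseteq> blocks k (N + k + 4)"
  proof clarify
    fix i u v
    assume "(i, u, v) \<in> S"
    then have i: "i < N" and u: "u \<in> fillers k i" and v: "v \<in> fillers k (N - 1 - i)"
      by (auto simp: S_def)
    have "marked_block k u v \<in> blocks k (i + (N - 1 - i) + k + 5)"
      by (rule marked_block_in_blocks[OF assms u v])
    moreover have "i + (N - 1 - i) + k + 5 = N + k + 4"
      using i by simp
    ultimately have "marked_block k u v \<in> blocks k (N + k + 4)"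
      by (simp only:)
    then show "h (i, u, v) \<in> blocks k (N + k + 4)"
      by (simp add: h_def)
  qed
  ultimately have "card S \<le> card (blocks k (N + k + 4))"
    by (simp add: card_inj_on_le)
  then show ?thesis
    by (simp add: S_def card_SigmaI card_cartesian_product)
qed

lemma card_blocks_ge:
  assumes "2 * k + 8 \<le> L" "8 * L \<le> 2 ^ k"
  shows "L * 2 ^ L \<le> card (blocks k L) * 2 ^ (k + 7)"
proof -
  define N where "N = L - k - 4"
  have k: "2 \<le> k"
  proof (rule ccontr)
    assume "\<not> 2 \<le> k"
    then have "(2 :: nat) ^ k \<le> 2 ^ 1"
      by (intro power_increasing) auto
    then show False
      using assms by simp
  qed
  have pair_bound: "2 ^ N \<le> 4 * (card (fillers k i) * card (fillers k (N - 1 - i)))" if "i \<in> {..<N}" for i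
  proof -
    have "3 * 2 ^ i \<le> 4 * card (fillers k i)" "3 * 2 ^ (N - 1 - i) \<le> 4 * card (fillers k (N - 1 - i))"
      using that assms(2) by (auto simp: N_def intro!: card_fillers_ge)
    then have "(3 * 2 ^ i) * (3 * 2 ^ (N - 1 - i))
        \<le> (4 * card (fillers k i)) * (4 * card (fillers k (N - 1 - i)))"
      by (rule mult_le_mono)
    moreover have "2 ^ i * 2 ^ (N - 1 - i) * 2 = (2 :: nat) ^ N"
      using that by (simp flip: power_add power_Suc2)
    ultimately show ?thesis
      by simp
  qed
  \<comment> \<open>summing over the position of the marker gains the factor N against 2^k\<close>
  have "N * 2 ^ N = (\<Sum>i<N. 2 ^ N)"
    by simp
  also have "\<dots> \<le> 4 * (\<Sum>i<N. card (fillers k i) * card (fillers k (N - 1 - i)))"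
    unfolding sum_distrib_left by (rule sum_mono[OF pair_bound])
  also have "\<dots> \<le> 4 * card (blocks k (N + k + 4))"
    using sum_card_fillers_le_card_blocks[OF k] by simp
  also have "N + k + 4 = L"
    using assms(1) by (simp add: N_def)
  finally have "N * 2 ^ N \<le> 4 * card (blocks k L)" .
  then have "2 * N * 2 ^ N * 2 ^ (k + 4) \<le> card (blocks k L) * 2 ^ (k + 7)"
    by (simp add: power_add)
  moreover have "L * 2 ^ L \<le> 2 * N * 2 ^ N * 2 ^ (k + 4)"
    using assms(1) by (simp add: N_def mult.assoc flip: power_add)
  ultimately show ?thesis
    by linarith
qed

section \<open>The code\<close>

lemma MU_if_marker_prefix:
  assumes "0 < k"
    and "\<And>w. w \<in> C \<Longrightarrow> length w = n \<and> last w = False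
      \<and> (\<exists>r. w = replicate k True @ False # r \<and> \<not> sublist (replicate k True) r)"
  shows "MU n C"
  unfolding MU_def
proof (intro ballI allI impI notI)
  fix a b l
  assume a: "a \<in> C" and b: "b \<in> C" and l: "1 \<le> l \<and> l < n" and eq: "take l a = drop (n - l) b"
  obtain ra where a_def: "a = replicate k True @ False # ra"
    using assms(2)[OF a] by blast
  obtain rb where b_def: "b = replicate k True @ False # rb" and rb: "\<not> sublist (replicate k True) rb"
    and "length b = n" "last b = False"
    using assms(2)[OF b] by blast
  show False
  proof (cases "l \<le> k")
    case True
    then have "last (take l a) = True"
      using l by (simp add: a_def)
    moreover have "last (drop (n - l) b) = False"
      using l \<open>length b = n\<close> \<open>last b = False\<close> by simp
    ultimately show False
      using eq by simp
  next
    case False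
    define d where "d = n - l"
    have d: "1 \<le> d" "d + k < n"
      using l False by (auto simp: d_def)
    have "take k (drop d b) = take k (take l a)"
      using eq by (simp add: d_def)
    also have "\<dots> = replicate k True"
      using False by (simp add: a_def)
    finally have run: "take k (drop d b) = replicate k True" .
    show False
    proof (cases "d \<le> k")
      case True
      then have "take k (drop d b) ! (k - d) = False"
        using d by (simp add: b_def nth_append)
      then show False
        using run d assms(1) by simp
    next
      case False
      then have "d - k = Suc (d - Suc k)"
        by simp
      then have "drop d b = drop (d - Suc k) rb"
        by (simp add: b_def)
      then have "sublist (take k (drop d b)) rb"
        by (metis sublist_drop sublist_take sublist_order.order_trans)
      then show False
        using run rb by simp
    qed
  qed
qed

lemma APD_if_windows_contain:
  assumes avoid: "\<And>w. w \<in> C \<Longrightarrow> \<not> sublist (map Not q) w \<and> \<not> sublist (rev (map Not q)) w"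
    and window: "\<And>w d. w \<in> C \<Longrightarrow> d + f \<le> n \<Longrightarrow> sublist q (take f (drop d w))"
  shows "APD f n C"
  unfolding APD_def
proof (intro ballI allI impI conjI notI)
  fix a b i j
  assume a: "a \<in> C" and b: "b \<in> C"
    and ij: "1 \<le> i \<and> i \<le> n + 1 - f \<and> 1 \<le> j \<and> j \<le> n + 1 - f"
  have "i - 1 + f \<le> n"
    using ij by linarith
  then have "sublist q (subw a i f)"
    unfolding subw_def by (rule window[OF a])
  then have compl: "sublist (map Not q) (compl_w (subw a i f))"
    by (simp add: compl_w_def map_mono_sublist)
  have "sublist (subw b j f) b"
    unfolding subw_def by (metis sublist_drop sublist_take sublist_order.order_trans)
  then have "\<not> sublist (map Not q) (subw b j f)" "\<not> sublist (rev (map Not q)) (subw b j f)"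
    using avoid[OF b] sublist_order.order_trans by blast+
  then show "compl_w (subw a i f) = subw b j f \<Longrightarrow> False"
    "compl_w (subw a i f) = rev (subw b j f) \<Longrightarrow> False"
    using compl by (auto simp: sublist_rev_right)
qed

lemma length_concat_same_length:
  "\<forall>b\<in>set bs. length b = g \<Longrightarrow> length (concat bs) = length bs * g"
  by (induction bs) auto

lemma window_block_index:
  fixes h g m t f d :: nat
  assumes "0 < g" "0 < m" "t + g \<le> f" "h + g \<le> f" "2 * g \<le> f + 1" "d + f \<le> h + m * g + t"
  shows "\<exists>j<m. d \<le> h + j * g \<and> h + j * g + g \<le> d + f"
proof (cases "d \<le> h")
  case True
  then show ?thesis
    using assms by (intro exI[of _ 0]) auto
next
  case False
  define j where "j = (d - h + g - 1) div g"
  have "j * g \<le> d - h + g - 1"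
    unfolding j_def by (rule div_times_less_eq_dividend)
  moreover have "d - h \<le> j * g"
    using mod_less_divisor[OF assms(1), of "d - h + g - 1"] div_mult_mod_eq[of "d - h + g - 1" g]
    unfolding j_def by linarith
  moreover from calculation have "j * g < m * g"
    using False assms by linarith
  then have "j < m"
    by simp
  ultimately show ?thesis
    using False assms by (intro exI[of _ j]) auto
qed

lemma sublist_take_drop_middle:
  assumes "d \<le> length X" "length X + length B \<le> d + f"
  shows "sublist B (take f (drop d (X @ B @ Y)))"
proof -
  have "take f (drop d (X @ B @ Y)) = drop d X @ B @ take (f - (length X - d + length B)) Y"
    using assms by simp
  then show ?thesis
    by (metis sublist_appendI)
qed

lemma window_contains_block:
  assumes "\<forall>b\<in>set bs. length b = g" "0 < g" "bs \<noteq> []"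
    "length t + g \<le> f" "length P + g \<le> f" "2 * g \<le> f + 1"
    "d + f \<le> length P + length bs * g + length t"
  shows "\<exists>b\<in>set bs. sublist b (take f (drop d (P @ concat bs @ t)))"
proof -
  obtain j where j: "j < length bs" "d \<le> length P + j * g" "length P + j * g + g \<le> d + f"
    using window_block_index[of g "length bs" "length t" f "length P" d] assms(2-7) by auto
  have "P @ concat bs @ t = (P @ concat (take j bs)) @ bs ! j @ concat (drop (Suc j) bs) @ t"
    using id_take_nth_drop[OF j(1)] by (metis append_assoc concat.simps(2) concat_append)
  moreover have "length (P @ concat (take j bs)) = length P + j * g"
    using assms(1) j(1) length_concat_same_length[of "take j bs" g] by (auto dest: in_set_takeD)
  moreover have "length (bs ! j) = g"
    using assms(1) j(1) by simp
  ultimately have "sublist (bs ! j) (take f (drop d (P @ concat bs @ t)))"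
    using j by (simp only: sublist_take_drop_middle)
  then show ?thesis
    using j(1) by auto
qed

definition code :: "nat \<Rightarrow> nat \<Rightarrow> nat \<Rightarrow> nat \<Rightarrow> bool list set" where
  "code k g m g' = (\<lambda>(bs, t). replicate k True @ False # concat bs @ t) `
     ({bs. set bs \<subseteq> blocks k g \<and> length bs = m} \<times> blocks k g')"

lemma card_code: "card (code k g m g') = card (blocks k g) ^ m * card (blocks k g')"
proof -
  let ?D = "{bs. set bs \<subseteq> blocks k g \<and> length bs = m} \<times> blocks k g'"
  have "(bs, t) = (bs', t')"
    if "(bs, t) \<in> ?D" "(bs', t') \<in> ?D"
      "replicate k True @ False # concat bs @ t = replicate k True @ False # concat bs' @ t'"
    for bs t bs' t'
  proof -
    have len: "\<forall>b\<in>set bs. length b = g" "\<forall>b\<in>set bs'. length b = g" "length bs = length bs'"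
      using that(1,2) by (auto simp: blocks_def words_def)
    then have "length (concat bs) = length (concat bs')"
      using length_concat_same_length[OF len(1)] length_concat_same_length[OF len(2)] by simp
    then have "concat bs = concat bs'" "t = t'"
      using that(3) by simp_all
    then show ?thesis
      using concat_injective len by (fastforce dest: set_zip_leftD set_zip_rightD)
  qed
  then have "inj_on (\<lambda>(bs, t). replicate k True @ False # concat bs @ t) ?D"
    by (intro inj_onI) auto
  then have "card (code k g m g') = card ?D"
    unfolding code_def by (rule card_image)
  then show ?thesis
    by (simp add: card_cartesian_product card_lists_length_eq)
qed

lemma code_MU_APD:
  assumes "0 < k" "0 < g" "0 < m" "g' + g \<le> f" "k + 1 + g \<le> f" "2 * g \<le> f + 1"
    and n: "n = k + 1 + m * g + g'"
  shows "code k g m g' \<subseteq> words n" "MU n (code k g m g')" "APD f n (code k g m g')"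
proof -
  let ?R = "replicate k True"
  have word: "length w = n \<and> last w = False \<and> (\<exists>r. w = ?R @ False # r \<and> \<not> sublist ?R r)
      \<and> \<not> sublist (replicate (Suc k) True) w
      \<and> (\<forall>d. d + f \<le> n \<longrightarrow> sublist (replicate (Suc k) False) (take f (drop d w)))"
    if w_mem: "w \<in> code k g m g'" for w
  proof -
    obtain bs t where w: "w = ?R @ False # concat bs @ t"
      and bs: "set bs \<subseteq> blocks k g" "length bs = m" and t: "t \<in> blocks k g'"
      using w_mem unfolding code_def by fastforce
    have lens: "\<forall>b\<in>set bs. length b = g" "length t = g'"
      using bs t by (auto simp: blocks_def words_def)
    have len: "length w = n"
      using length_concat_same_length[OF lens(1)] lens(2) bs(2) n by (simp add: w)
    have nonempty: "\<forall>b\<in>blocks k L. b \<noteq> []" for L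
      by (auto simp: blocks_def)
    have rest: "\<not> sublist ?R (concat bs @ t)"
      using bs(1) t nonempty by (intro not_sublist_concat_append[where y = False]) (auto simp: blocks_def)
    have "\<not> sublist (replicate (Suc k) True) (?R @ False # concat bs @ t)"
    proof (rule not_sublist_append_Cons)
      show "\<not> sublist (replicate (Suc k) True) ?R"
        by (auto dest: sublist_length_le)
      have "sublist ?R (replicate (Suc k) True)"
        by (simp add: sublist_Cons_right)
      then show "\<not> sublist (replicate (Suc k) True) (concat bs @ t)"
        using rest sublist_order.order_trans by blast
    qed simp
    moreover have "sublist (replicate (Suc k) False) (take f (drop d w))" if "d + f \<le> n" for d
    proof -
      have "\<exists>b\<in>set bs. sublist b (take f (drop d ((?R @ [False]) @ concat bs @ t)))"
        using assms(1-6) lens bs(2) that by (intro window_contains_block) (auto simp: n)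
      then show ?thesis
        using bs(1) by (auto simp: w blocks_def intro: sublist_order.order_trans)
    qed
    ultimately show ?thesis
      using len t nonempty rest by (auto simp: w blocks_def)
  qed
  show "code k g m g' \<subseteq> words n"
    using word by (auto simp: words_def)
  show "MU n (code k g m g')"
    using word by (intro MU_if_marker_prefix[OF assms(1)]) blast
  show "APD f n (code k g m g')"
    using word by (intro APD_if_windows_contain[where q = "replicate (Suc k) False"])
      (auto simp: replicate_append_same)
qed

section \<open>Choice of parameters\<close>

text \<open>Blocks have length about f/3, so every window of length f contains a whole block.\<close>

lemma code_parameters:
  assumes "0 < p" "0 < f" "256 * p * f \<le> 2 ^ (f div 6)"
  obtains k g m g' where "p * f = k + 1 + m * g + g'" "0 < k"
    "2 ^ (k + 1) \<le> 32 * (p * f)" "8 * (p * f) \<le> 2 ^ k" "2 ^ k \<le> 64 * p * g"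
    "2 * k + 8 \<le> g" "g \<le> g'" "g' + g \<le> f" "k + 1 + g \<le> f" "2 * g \<le> f + 1"
    "0 < m" "m + 1 \<le> 4 * p"
proof -
  define n where "n = p * f"
  define k where "k = floor_log n + 4"
  have n: "0 < n" "f \<le> n"
    using assms(1,2) by (auto simp: n_def)
  have k: "8 * n \<le> 2 ^ k" "2 ^ k \<le> 16 * n"
    using floor_log_exp2_gt[of n] floor_log_exp2_le[OF n(1)] by (simp_all add: k_def power_add)
  have "(2 :: nat) ^ (k + 4) \<le> 2 ^ (f div 6)"
    using k(2) assms(3) by (simp add: n_def power_add mult.assoc)
  then have "k + 4 \<le> f div 6"
    by simp
  define g where "g = f div 3"
  have g: "2 * k + 8 \<le> g" "3 * g \<le> f" "f < 3 * g + 3"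
    using \<open>k + 4 \<le> f div 6\<close> by (simp_all add: g_def)
  define N where "N = n - k - 1"
  define m where "m = N div g - 1"
  define g' where "g' = g + N mod g"
  have "2 * g \<le> N"
    using g n by (simp add: N_def)
  then have "2 \<le> N div g"
    using g by (simp add: less_eq_div_iff_mult_less_eq)
  then have decomp: "N = m * g + g + N mod g"
    by (simp add: m_def algebra_simps)
  have "N mod g < g"
    using g by simp
  have "f \<le> 4 * g"
    using g by linarith
  then have n_le: "n \<le> 4 * p * g"
    using mult_le_mono2[of f "4 * g" p] by (simp add: n_def mult_ac)
  have "(m + 1) * g < 4 * p * g"
    using decomp n_le n(1) unfolding N_def by (simp add: algebra_simps)
  then have "m + 1 < 4 * p"
    using mult_less_cancel2 by blast
  show ?thesis
  proof (rule that)
    show "p * f = k + 1 + m * g + g'"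
      using decomp \<open>2 * g \<le> N\<close> g unfolding N_def g'_def n_def[symmetric] by linarith
    show "0 < k"
      by (simp add: k_def)
    show "2 ^ (k + 1) \<le> 32 * (p * f)" "8 * (p * f) \<le> 2 ^ k"
      using k by (simp_all add: n_def ac_simps)
    show "2 ^ k \<le> 64 * p * g"
      using k(2) n_le by linarith
    show "2 * k + 8 \<le> g" "g \<le> g'" "g' + g \<le> f" "k + 1 + g \<le> f" "2 * g \<le> f + 1"
      using g \<open>N mod g < g\<close> unfolding g'_def by linarith+
    show "0 < m" "m + 1 \<le> 4 * p"
      using \<open>2 \<le> N div g\<close> \<open>m + 1 < 4 * p\<close> by (simp_all add: m_def)
  qed
qed

lemma card_code_ge:
  assumes "2 ^ g \<le> card (blocks k g) * c" "2 ^ g' \<le> card (blocks k g') * c"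
  shows "2 ^ (m * g + g') \<le> card (code k g m g') * c ^ (m + 1)"
proof -
  have "(2 :: nat) ^ (m * g) = (2 ^ g) ^ m"
    by (simp add: power_mult mult.commute)
  also have "\<dots> \<le> (card (blocks k g) * c) ^ m"
    using assms(1) by (rule power_mono) simp
  finally have "(2 :: nat) ^ (m * g + g') \<le> (card (blocks k g) * c) ^ m * (card (blocks k g') * c)"
    unfolding power_add using assms(2) by (rule mult_le_mono)
  also have "\<dots> = card (code k g m g') * c ^ (m + 1)"
    by (simp add: card_code power_mult_distrib)
  finally show ?thesis .
qed

lemma square_le_pow2: "4 \<le> m \<Longrightarrow> m * m \<le> (2 :: nat) ^ m"
proof (induction m rule: nat_induct_at_least)
  case (Suc m)
  have "4 * m \<le> m * m"
    using Suc.hyps by (rule mult_le_mono1)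
  moreover have "Suc m * Suc m = m * m + 2 * m + 1"
    by simp
  ultimately have "Suc m * Suc m \<le> 2 * (m * m)"
    using Suc.hyps by linarith
  then show ?case
    using Suc.IH by simp
qed simp

lemma linear_le_pow2_div6: "\<exists>F. \<forall>f\<ge>F. a * f \<le> (2 :: nat) ^ (f div 6)"
proof (intro exI allI impI)
  fix f :: nat
  assume "6 * (11 * a + 4) \<le> f"
  then have m: "11 * a + 4 \<le> f div 6"
    by simp
  have "a * f \<le> a * (11 * (f div 6))"
    using m by (intro mult_le_mono2) linarith
  also have "\<dots> \<le> f div 6 * (f div 6)"
    using m by (simp add: mult_le_mono1)
  also have "\<dots> \<le> 2 ^ (f div 6)"
    using m by (intro square_le_pow2) simp
  finally show "a * f \<le> 2 ^ (f div 6)" .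
qed

lemma A_APD_MU_ge:
  assumes "0 < p" "0 < f" "256 * p * f \<le> 2 ^ (f div 6)"
  shows "2 ^ (p * f) \<le> 32 * (p * f) * (8192 * p) ^ (4 * p) * A_APD_MU f (p * f)"
proof -
  obtain k g m g' where n: "p * f = k + 1 + m * g + g'" and "0 < k"
    and k: "2 ^ (k + 1) \<le> 32 * (p * f)" "8 * (p * f) \<le> 2 ^ k" "2 ^ k \<le> 64 * p * g"
    and g: "2 * k + 8 \<le> g" "g \<le> g'" "g' + g \<le> f" "k + 1 + g \<le> f" "2 * g \<le> f + 1"
    and m: "0 < m" "m + 1 \<le> 4 * p"
    by (rule code_parameters[OF assms])
  have blocks: "2 ^ L \<le> card (blocks k L) * (8192 * p)" if "g \<le> L" "L \<le> p * f" for L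
  proof -
    have "2 ^ k \<le> 64 * p * L"
      using k(3) mult_le_mono2[OF that(1), of "64 * p"] by linarith
    have "L * 2 ^ L \<le> card (blocks k L) * 2 ^ (k + 7)"
      using that g(1) k(2) by (intro card_blocks_ge) auto
    also have "\<dots> = card (blocks k L) * (128 * 2 ^ k)"
      by (simp add: power_add)
    also have "\<dots> \<le> card (blocks k L) * (128 * (64 * p * L))"
      by (intro mult_le_mono2 \<open>2 ^ k \<le> 64 * p * L\<close>)
    finally have "L * 2 ^ L \<le> L * (card (blocks k L) * (8192 * p))"
      by (simp add: ac_simps)
    then show ?thesis
      using that(1) g(1) by simp
  qed
  have "2 ^ (m * g + g') \<le> card (code k g m g') * (8192 * p) ^ (m + 1)"
    using n g(2) by (intro card_code_ge blocks) auto
  also have "\<dots> \<le> card (code k g m g') * (8192 * p) ^ (4 * p)"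
    using m(2) assms(1) by (intro mult_le_mono2 power_increasing) auto
  also have "\<dots> \<le> A_APD_MU f (p * f) * (8192 * p) ^ (4 * p)"
    using code_MU_APD[OF \<open>0 < k\<close> _ m(1) g(3-5) n] g(1) by (intro mult_le_mono1 card_le_A_APD_MU) auto
  finally have "2 ^ (m * g + g') \<le> A_APD_MU f (p * f) * (8192 * p) ^ (4 * p)" .
  with k(1) have "2 ^ (k + 1) * 2 ^ (m * g + g') \<le> 32 * (p * f) * (A_APD_MU f (p * f) * (8192 * p) ^ (4 * p))"
    by (rule mult_le_mono)
  moreover have "(2 :: nat) ^ (p * f) = 2 ^ (k + 1) * 2 ^ (m * g + g')"
    unfolding n by (simp add: power_add)
  ultimately show ?thesis
    by (simp only: ac_simps)
qed

theorem theorem7: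
  fixes p :: nat
  assumes "p > 0"
  shows "\<exists>c3::real. c3 > 0 \<and> (\<exists>F. \<forall>f\<ge>F. even f \<longrightarrow>
           c3 * 2 ^ (p * f) / real (p * f) \<le> real (A_APD_MU f (p * f)) \<and>
           real (A_APD_MU f (p * f)) \<le> 2 ^ (p * f) / real (p * f))"
proof -
  define B :: nat where "B = 32 * (8192 * p) ^ (4 * p)"
  obtain F where F: "\<forall>f\<ge>F. 256 * p * f \<le> (2 :: nat) ^ (f div 6)"
    using linear_le_pow2_div6 by blast
  have "1 / real B * 2 ^ (p * f) / real (p * f) \<le> real (A_APD_MU f (p * f))
      \<and> real (A_APD_MU f (p * f)) \<le> 2 ^ (p * f) / real (p * f)" if "max F 1 \<le> f" for f
  proof -
    have pos: "0 < real (p * f)" "0 < real B"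
      using assms that by (auto simp: B_def)
    have "2 ^ (p * f) \<le> p * f * B * A_APD_MU f (p * f)"
      using A_APD_MU_ge[OF assms, of f] F that by (simp add: B_def ac_simps)
    then have "2 ^ (p * f) \<le> real (p * f) * real B * real (A_APD_MU f (p * f))"
      by (metis of_nat_le_iff of_nat_mult of_nat_numeral of_nat_power)
    moreover have "real (p * f) * real (A_APD_MU f (p * f)) \<le> 2 ^ (p * f)"
      using A_APD_MU_le[of "p * f" f] by (metis of_nat_le_iff of_nat_mult of_nat_numeral of_nat_power)
    ultimately show ?thesis
      using pos by (simp add: divide_le_eq le_divide_eq mult_ac)
  qed
  moreover have "0 < 1 / real B"
    using assms by (simp add: B_def)
  ultimately show ?thesis
    by blast
qed

end
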